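(* Let $\mathfrak e\in\mathbb R^\times$. Define $\widetilde s:SO_2(\mathbb R)\to\mathbb C^\times$ by $\widetilde s(k_t)=e^{-\frac{i\pi\operatorname{sgn}(\mathfrak e)}{4}u'(t)}$ for $-\pi\le t<\pi$. Then for all $g_1,g_2\in SO_2(\mathbb R)$, $$\widetilde c_{\mathfrak e}(g_1,g_2)=\widetilde s(g_1)^{-1}\widetilde s(g_2)^{-1}\widetilde s(g_1g_2);$$ in particular the restriction of the class of $\widetilde c_{\mathfrak e}$ to $SO_2(\mathbb R)$ is trivial.
   Context: For $t\in[-\pi,\pi)$, $k_t=\begin{pmatrix}\cos t&-\sin t\\\sin t&\cos t\end{pmatrix}$, so $SO_2(\mathbb R)=\{k_t:-\pi\le t<\pi\}$. $u:\mathbb R\to\mathbb Z$ is $u(t)=2k$ if $t=k\pi$ ($k\in\mathbb Z$) and $u(t)=2k+1$ if $k\pi<t<(k+1)\pi$; $u'(t)=u(t)+\frac{2}{\pi}t$. For $g_1,g_2\in SL_2(\mathbb R)$ with $g_3=g_1g_2$ and lower-left entries $c_1,c_2,c_3$, $\widetilde c_{\mathfrak e}(g_1,g_2)=e^{\frac{i\pi\operatorname{sgn}(\mathfrak e)}{4}\operatorname{sgn}(c_1c_2c_3)}$ (with $\operatorname{sgn}(0)=0$); this is the Perrin–Rao $\mu_8$-valued cocycle attached to the character $t\mapsto e^{2\pi i\mathfrak et}$. *)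

theory Defs
  imports "HOL-Analysis.Analysis"
begin

definition rot :: "real \<Rightarrow> real^2^2" where
  "rot t = (\<chi> i j. if i = 1 \<and> j = 1 then cos t
                   else if i = 1 \<and> j = 2 then - sin t
                   else if i = 2 \<and> j = 1 then sin t
                   else cos t)"

definition SO2 :: "(real^2^2) set" where
  "SO2 = {rot t | t. - pi \<le> t \<and> t < pi}"

definition u_fun :: "real \<Rightarrow> int" where
  "u_fun t = (if t / pi \<in> \<int> then 2 * \<lfloor>t / pi\<rfloor> else 2 * \<lfloor>t / pi\<rfloor> + 1)"

definition u_prime :: "real \<Rightarrow> real" where
  "u_prime t = real_of_int (u_fun t) + 2 / pi * t"

definition lowleft :: "real^2^2 \<Rightarrow> real" where
  "lowleft g = g $ 2 $ 1"

definition ctilde :: "real \<Rightarrow> real^2^2 \<Rightarrow> real^2^2 \<Rightarrow> complex" where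
  "ctilde e g1 g2 = exp (\<i> * complex_of_real (pi * sgn e / 4
        * sgn (lowleft g1 * lowleft g2 * lowleft (g1 ** g2))))"

definition angle_of :: "real^2^2 \<Rightarrow> real" where
  "angle_of g = (THE t. - pi \<le> t \<and> t < pi \<and> rot t = g)"

definition stilde :: "real \<Rightarrow> real^2^2 \<Rightarrow> complex" where
  "stilde e g = exp (- \<i> * complex_of_real (pi * sgn e / 4 * u_prime (angle_of g)))"

end

theory Submission
  imports Defs
begin

text \<open>Write \<open>g\<^sub>1 = k\<^sub>a\<close>, \<open>g\<^sub>2 = k\<^sub>b\<close> and \<open>g\<^sub>1 g\<^sub>2 = k\<^sub>c\<close> with
  \<open>a, b, c \<in> [-\<pi>, \<pi>)\<close>, so that \<open>a + b = c + 2\<pi>n\<close> with \<open>n \<in> {-1, 0, 1}\<close>. The lower-left entry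
  of \<open>k\<^sub>t\<close> is \<open>sin t\<close>, so both sides are of the form \<open>exp(i\<pi> sgn(\<mathfrak>e)/4 \<cdot> x)\<close>, with
  \<open>x = sgn(sin a sin b sin c)\<close> on the left and \<open>x = u'(a) + u'(b) - u'(c) = u(a) + u(b) - u(c) + 4n\<close>
  on the right. These two integers agree modulo 8, which is checked by a case distinction
  on the position of \<open>a\<close>, \<open>b\<close>, \<open>c\<close> relative to \<open>-\<pi>\<close> and \<open>0\<close>.\<close>

lemma rot_mult: "rot a ** rot b = rot (a + b)"
  by (simp add: vec_eq_iff forall_2 matrix_matrix_mult_def sum_2 rot_def cos_add sin_add)

lemma rot_eq_iff: "rot s = rot t \<longleftrightarrow> (\<exists>n::int. s = t + 2 * pi * of_int n)"
proof -
  have "rot s = rot t \<longleftrightarrow> sin s = sin t \<and> cos s = cos t"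
    by (auto simp: rot_def vec_eq_iff forall_2)
  then show ?thesis
    using sin_cos_eq_iff by presburger
qed

lemma inj_on_rot: "inj_on rot {- pi..<pi}"
proof (rule inj_onI)
  fix s t assume range: "s \<in> {- pi..<pi}" "t \<in> {- pi..<pi}" and "rot s = rot t"
  then obtain n :: int where n: "s = t + 2 * pi * of_int n"
    using rot_eq_iff by blast
  have "2 * pi * of_int n < 2 * pi * 1" "2 * pi * (- 1) < 2 * pi * of_int n"
    using n range unfolding atLeastLessThan_iff by linarith+
  moreover have "0 < 2 * pi"
    by simp
  ultimately have "of_int n < (1 :: real)" "(- 1 :: real) < of_int n"
    by (simp_all only: mult_less_cancel_left_pos)
  then have "n = 0"
    by linarith
  then show "s = t"
    using n by simp
qed

lemma angle_of_rot: "- pi \<le> t \<Longrightarrow> t < pi \<Longrightarrow> angle_of (rot t) = t"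
  unfolding angle_of_def
  by (rule the_equality) (auto dest: inj_onD[OF inj_on_rot])

lemma rot_mult_Ico:
  assumes "- pi \<le> a" "a < pi" "- pi \<le> b" "b < pi"
  obtains c and n :: int
  where "- pi \<le> c" "c < pi" "a + b = c + 2 * pi * of_int n" "rot a ** rot b = rot c"
proof
  define n :: int where "n = (if a + b < - pi then -1 else if a + b < pi then 0 else 1)"
  show "- pi \<le> a + b - 2 * pi * of_int n" "a + b - 2 * pi * of_int n < pi"
    using assms by (auto simp: n_def)
  show "a + b = a + b - 2 * pi * of_int n + 2 * pi * of_int n"
    by simp
  show "rot a ** rot b = rot (a + b - 2 * pi * of_int n)"
    unfolding rot_mult rot_eq_iff by auto
qed

lemma lowleft_rot: "lowleft (rot t) = sin t"
  by (simp add: lowleft_def rot_def)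

lemma u_fun_int_multiple: "u_fun (of_int k * pi) = 2 * k"
  by (simp add: u_fun_def)

lemma u_fun_between_multiples:
  assumes "of_int k * pi < t" "t < (of_int k + 1) * pi"
  shows "u_fun t = 2 * k + 1"
proof -
  have bounds: "of_int k < t / pi" "t / pi < of_int k + 1"
    using assms by (simp_all add: field_simps)
  then have "\<lfloor>t / pi\<rfloor> = k"
    by (simp add: floor_eq_iff)
  moreover have "t / pi \<notin> \<int>"
    using bounds by (metis frac_gt_0_iff frac_def calculation diff_gt_0_iff_gt)
  ultimately show ?thesis
    by (simp add: u_fun_def)
qed

lemma u_fun_Ico:
  assumes "- pi \<le> t" "t < pi"
  shows "u_fun t = (if t = - pi then -2 else if t < 0 then -1 else if t = 0 then 0 else 1)"
  using assms u_fun_int_multiple[of "-1"] u_fun_int_multiple[of 0]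
    u_fun_between_multiples[of "-1" t] u_fun_between_multiples[of 0 t]
  by auto

lemma sgn_sin_Ico:
  assumes "- pi \<le> t" "t < pi"
  shows "sgn (sin t) = (if t = - pi then 0 else if t < 0 then -1 else if t = 0 then 0 else 1)"
proof -
  consider "t = - pi" | "- pi < t" "t < 0" | "t = 0" | "0 < t" "t < pi"
    using assms by linarith
  then show ?thesis
    by cases (use sin_gt_zero[of t] sin_gt_zero[of "- t"] in auto)
qed

lemma sgn_sin_eq_u_prime_mod_8:
  assumes "- pi \<le> a" "a < pi" "- pi \<le> b" "b < pi" "- pi \<le> c" "c < pi"
    and "a + b = c + 2 * pi * of_int n"
  shows "\<exists>k::int. sgn (sin a * sin b * sin c) = u_prime a + u_prime b - u_prime c + 8 * k"
proof -
  have "2 * pi * of_int n < 2 * pi * (3 / 2)" "2 * pi * (- 3 / 2) < 2 * pi * of_int n"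
    using assms by linarith+
  moreover have "0 < 2 * pi"
    by simp
  ultimately have "of_int n < (3 / 2 :: real)" "(- 3 / 2 :: real) < of_int n"
    by (simp_all only: mult_less_cancel_left_pos)
  then have n: "n = -1 \<or> n = 0 \<or> n = 1"
    by linarith
  have "2 / pi * a + 2 / pi * b - 2 / pi * c = 2 / pi * (a + b - c)"
    by (simp only: distrib_left right_diff_distrib)
  also have "\<dots> = 4 * of_int n"
    using assms(7) by simp
  finally have "u_prime a + u_prime b - u_prime c = u_fun a + u_fun b - u_fun c + 4 * n"
    unfolding u_prime_def by simp
  moreover have "sgn (sin a * sin b * sin c) - (u_fun a + u_fun b - u_fun c + 4 * n) \<in> {0, 8, -8}"
    unfolding sgn_mult sgn_sin_Ico[OF assms(1,2)] sgn_sin_Ico[OF assms(3,4)] sgn_sin_Ico[OF assms(5,6)]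
      u_fun_Ico[OF assms(1,2)] u_fun_Ico[OF assms(3,4)] u_fun_Ico[OF assms(5,6)]
    using assms n by (auto split: if_splits) (insert pi_gt_zero, linarith)+
  ultimately show ?thesis
    by (auto intro: exI[of _ 0] exI[of _ 1] exI[of _ "-1"])
qed

lemma exp_quarter_turns_mod_8:
  assumes "\<sigma> \<in> \<int>" and "x = y + 8 * of_int k"
  shows "exp (\<i> * complex_of_real (pi * \<sigma> / 4 * x)) = exp (\<i> * complex_of_real (pi * \<sigma> / 4 * y))"
proof -
  obtain m where m: "\<sigma> = of_int m"
    using assms(1) by (auto elim: Ints_cases)
  have "\<i> * complex_of_real (pi * \<sigma> / 4 * x)
      = \<i> * complex_of_real (pi * \<sigma> / 4 * y) + of_int (2 * (m * k)) * pi * \<i>"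
    by (simp add: assms(2) m algebra_simps)
  then show ?thesis
    unfolding exp_eq by blast
qed

lemma exp_add_diff_eq_inverse_exp_minus:
  "exp (A + B - C) = inverse (exp (- A)) * inverse (exp (- B)) * exp (- C :: complex)"
  by (simp add: exp_diff exp_add exp_minus divide_inverse)

lemma sgn_real_in_Ints: "sgn (x :: real) \<in> \<int>"
  by (cases x "0 :: real" rule: linorder_cases) auto

theorem mainTheorem15:
  fixes e :: real and g1 g2 :: "real^2^2"
  assumes "e \<noteq> 0" and "g1 \<in> SO2" and "g2 \<in> SO2"
  shows "ctilde e g1 g2
           = inverse (stilde e g1) * inverse (stilde e g2) * stilde e (g1 ** g2)"
proof -
  obtain a b where a: "- pi \<le> a" "a < pi" "g1 = rot a" and b: "- pi \<le> b" "b < pi" "g2 = rot b"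
    using assms(2,3) unfolding SO2_def by auto
  then obtain c n where c: "- pi \<le> c" "c < pi" "a + b = c + 2 * pi * of_int n"
    and g1g2: "g1 ** g2 = rot c"
    using rot_mult_Ico by metis
  obtain k :: int where k: "sgn (sin a * sin b * sin c) = u_prime a + u_prime b - u_prime c + 8 * of_int k"
    using sgn_sin_eq_u_prime_mod_8[OF a(1,2) b(1,2) c] by blast
  let ?\<phi> = "\<lambda>x. \<i> * complex_of_real (pi * sgn e / 4 * x)"
  have "ctilde e g1 g2 = exp (?\<phi> (sgn (sin a * sin b * sin c)))"
    unfolding ctilde_def g1g2 by (simp add: a(3) b(3) lowleft_rot)
  also have "\<dots> = exp (?\<phi> (u_prime a + u_prime b - u_prime c))"
    by (rule exp_quarter_turns_mod_8[OF sgn_real_in_Ints k])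
  also have "\<dots> = exp (?\<phi> (u_prime a) + ?\<phi> (u_prime b) - ?\<phi> (u_prime c))"
    by (simp only: distrib_left right_diff_distrib of_real_add of_real_diff)
  also have "\<dots> = inverse (exp (- ?\<phi> (u_prime a))) * inverse (exp (- ?\<phi> (u_prime b)))
      * exp (- ?\<phi> (u_prime c))"
    by (rule exp_add_diff_eq_inverse_exp_minus)
  also have "\<dots> = inverse (stilde e g1) * inverse (stilde e g2) * stilde e (g1 ** g2)"
    unfolding stilde_def g1g2 unfolding a(3) b(3) by (simp add: a(1,2) b(1,2) c(1,2) angle_of_rot)
  finally show ?thesis .
qed

end
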